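(* Let $(X,d)$ be a compact metric space and $f_{1,\infty}=\{f_n\}_{n\ge1}$ a commutative sequence of continuous self-maps of $X$. The following are equivalent: (1) $(X,f_{1,\infty})$ is weakly mixing; (2) $(\mathcal{M}(X),\widetilde{f}_{1,\infty})$ is weakly mixing; (3) $(\mathcal{M}(X),\widetilde{f}_{1,\infty})$ is topologically transitive.
   Context: The family is commutative if $f_i\circ f_j=f_j\circ f_i$ for all $i,j$. Write $f_1^n=f_n\circ\cdots\circ f_1$. $\mathcal{M}(X)$ is the space of Borel probability measures on $X$ with the weak$^*$ topology, and $\widetilde{f}_1^n(\mu)(A)=\mu((f_1^n)^{-1}(A))$ for Borel $A$. A non-autonomous system $(Y,g_{1,\infty})$ is topologically transitive if for all non-empty open $U,V$ there is $n\in\mathbb{N}$ with $g_1^n(U)\cap V\ne\emptyset$, and weakly mixing if for all non-empty open $U_1,U_2,V_1,V_2$ there is $n\in\mathbb{N}$ with $g_1^n(U_i)\cap V_i\ne\emptyset$ for $i=1,2$. *)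

theory Defs
  imports "HOL-Analysis.Analysis" "HOL-Probability.Probability_Measure"
begin

text \<open>The composed maps f_1^n = f_n o ... o f_1 (f_1^0 = id); the sequence is indexed from 1,
  the value f 0 is irrelevant.\<close>
primrec comp_seq :: "(nat \<Rightarrow> 'a \<Rightarrow> 'a) \<Rightarrow> nat \<Rightarrow> 'a \<Rightarrow> 'a" where
  "comp_seq f 0 = id"
| "comp_seq f (Suc n) = f (Suc n) \<circ> comp_seq f n"

definition commutative_seq :: "(nat \<Rightarrow> 'a \<Rightarrow> 'a) \<Rightarrow> bool" where
  "commutative_seq f \<longleftrightarrow> (\<forall>i\<ge>1. \<forall>j\<ge>1. f i \<circ> f j = f j \<circ> f i)"

text \<open>Non-autonomous system on a topological space T, given via its composed maps G n = g_1^n.\<close>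
definition na_transitive :: "'b topology \<Rightarrow> (nat \<Rightarrow> 'b \<Rightarrow> 'b) \<Rightarrow> bool" where
  "na_transitive T G \<longleftrightarrow>
     (\<forall>U V. openin T U \<and> U \<noteq> {} \<and> openin T V \<and> V \<noteq> {} \<longrightarrow>
        (\<exists>n\<ge>1. G n ` U \<inter> V \<noteq> {}))"

definition na_weakly_mixing :: "'b topology \<Rightarrow> (nat \<Rightarrow> 'b \<Rightarrow> 'b) \<Rightarrow> bool" where
  "na_weakly_mixing T G \<longleftrightarrow>
     (\<forall>U1 U2 V1 V2. openin T U1 \<and> U1 \<noteq> {} \<and> openin T U2 \<and> U2 \<noteq> {} \<and>
        openin T V1 \<and> V1 \<noteq> {} \<and> openin T V2 \<and> V2 \<noteq> {} \<longrightarrow>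
        (\<exists>n\<ge>1. G n ` U1 \<inter> V1 \<noteq> {} \<and> G n ` U2 \<inter> V2 \<noteq> {}))"

definition prob_measures :: "'a::topological_space measure set" where
  "prob_measures = {M. sets M = sets borel \<and> prob_space M}"

definition weak_star_topology :: "'a::topological_space measure topology" where
  "weak_star_topology = topology_generated_by
     {{M \<in> prob_measures. (\<integral>x. g x \<partial>M) \<in> U} | (g :: 'a \<Rightarrow> real) U. continuous_on UNIV g \<and> open U}"

definition induced_comp :: "(nat \<Rightarrow> 'a::topological_space \<Rightarrow> 'a) \<Rightarrow> nat \<Rightarrow> 'a measure \<Rightarrow> 'a measure" where
  "induced_comp f n M = distr M borel (comp_seq f n)"

end

theory Submission
  imports Defs "HOL-Probability.Probability"
begin

text \<open>For (3) implies (1), bump functions turn open sets of \<open>X\<close> into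
  weak* open sets of measures: transitivity applied to measures near a Dirac mass in \<open>U\<close> and
  near the uniform measure on a point of \<open>V1\<close> and one of \<open>V2\<close> yields one time at which
  \<open>f_1^n(U)\<close> meets both \<open>V1\<close> and \<open>V2\<close>; for a commuting system this already implies weak
  mixing. For (1) implies (2), weak mixing of a commuting system lets a single time \<open>n\<close> connect
  all pairs of cells of a fine finite net of the compact space \<open>X\<close>. Pushing \<open>\<mu> \<otimes> \<nu>\<close> forward
  along a measurable choice of a point near \<open>x\<close> whose image under \<open>f_1^n\<close> is near \<open>y\<close> gives
  a measure weak* close to \<open>\<mu>\<close> whose image is weak* close to \<open>\<nu>\<close>, simultaneously for all
  \<open>\<mu>, \<nu>\<close>.\<close>

lemma continuous_on_comp_seq:
  assumes "\<And>n. n \<ge> 1 \<Longrightarrow> continuous_on UNIV (f n)"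
  shows "continuous_on UNIV (comp_seq f n)"
proof (induction n)
  case (Suc n)
  then show ?case
    using assms[of "Suc n"] by (auto intro: continuous_on_compose2[of UNIV])
qed (simp add: continuous_on_id)

lemma comp_seq_commute_map:
  assumes "commutative_seq f" "i \<ge> 1"
  shows "f i (comp_seq f n x) = comp_seq f n (f i x)"
proof (induction n arbitrary: x)
  case (Suc n)
  have "f i \<circ> f (Suc n) = f (Suc n) \<circ> f i"
    using assms unfolding commutative_seq_def by simp
  then show ?case using Suc by (simp add: fun_eq_iff)
qed simp

lemma comp_seq_commute:
  assumes "commutative_seq f"
  shows "comp_seq f m (comp_seq f n x) = comp_seq f n (comp_seq f m x)"
  by (induction m arbitrary: x) (simp_all add: comp_seq_commute_map[OF assms])

lemma na_weakly_mixing_imp_na_transitive: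
  "na_weakly_mixing T G \<Longrightarrow> na_transitive T G"
  unfolding na_weakly_mixing_def na_transitive_def
  by (metis (no_types, lifting))

text \<open>Commutativity lets one pair of open sets stand for two: if \<open>x \<in> U1\<close>, \<open>F j x \<in> U2\<close>,
  \<open>F n x \<in> V1\<close> and \<open>F j (F n x) \<in> V2\<close>, then \<open>F j x\<close> witnesses \<open>F n ` U2 \<inter> V2 \<noteq> {}\<close>
  because \<open>F n (F j x) = F j (F n x)\<close>.\<close>
lemma na_weakly_mixing_merge_pairs:
  fixes F :: "nat \<Rightarrow> 'a::topological_space \<Rightarrow> 'a"
  assumes cont: "\<And>n. continuous_on UNIV (F n)"
    and comm: "\<And>m n x. F m (F n x) = F n (F m x)"
    and wm: "na_weakly_mixing euclidean F"
    and o: "open U1" "U1 \<noteq> {}" "open V1" "V1 \<noteq> {}" "open U2" "U2 \<noteq> {}" "open V2" "V2 \<noteq> {}"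
  obtains U V where "open U" "U \<noteq> {}" "open V" "V \<noteq> {}"
    "\<And>n. F n ` U \<inter> V \<noteq> {} \<Longrightarrow> F n ` U1 \<inter> V1 \<noteq> {} \<and> F n ` U2 \<inter> V2 \<noteq> {}"
proof -
  obtain j where j: "F j ` U1 \<inter> U2 \<noteq> {}" "F j ` V1 \<inter> V2 \<noteq> {}"
    using wm o unfolding na_weakly_mixing_def by (metis open_openin)
  define U where "U = U1 \<inter> F j -` U2"
  define V where "V = V1 \<inter> F j -` V2"
  have "open U" "U \<noteq> {}" "open V" "V \<noteq> {}"
    using o cont j unfolding U_def V_def by (auto intro!: open_vimage)
  moreover have "F n ` U1 \<inter> V1 \<noteq> {} \<and> F n ` U2 \<inter> V2 \<noteq> {}" if hit: "F n ` U \<inter> V \<noteq> {}" for n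
  proof -
    obtain x where x: "x \<in> U1" "F j x \<in> U2" "F n x \<in> V1" "F j (F n x) \<in> V2"
      using hit unfolding U_def V_def by blast
    then have "F n (F j x) \<in> V2"
      by (simp add: comm)
    then show ?thesis
      using x by blast
  qed
  ultimately show ?thesis
    by (rule that)
qed

lemma na_weakly_mixing_finite_family:
  fixes F :: "nat \<Rightarrow> 'a::topological_space \<Rightarrow> 'a"
  assumes cont: "\<And>n. continuous_on UNIV (F n)"
    and comm: "\<And>m n x. F m (F n x) = F n (F m x)"
    and wm: "na_weakly_mixing euclidean F"
    and "finite I"
    and "\<And>i. i \<in> I \<Longrightarrow> open (U i) \<and> U i \<noteq> {} \<and> open (V i) \<and> V i \<noteq> {}"
  shows "\<exists>n\<ge>1. \<forall>i\<in>I. F n ` U i \<inter> V i \<noteq> {}"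
  using assms(4,5)
proof (induction I arbitrary: U V rule: finite_induct)
  case empty
  then show ?case by blast
next
  case (insert i I)
  have i: "open (U i)" "U i \<noteq> {}" "open (V i)" "V i \<noteq> {}"
    using insert.prems by auto
  show ?case
  proof (cases "I = {}")
    case True
    obtain n where "n \<ge> 1" "F n ` U i \<inter> V i \<noteq> {}"
      using wm i unfolding na_weakly_mixing_def by (metis open_openin)
    then show ?thesis
      using True by blast
  next
    case False
    then obtain k where "k \<in> I"
      by blast
    then have k: "open (U k)" "U k \<noteq> {}" "open (V k)" "V k \<noteq> {}"
      using insert.prems by auto
    obtain U' V' where "open U'" "U' \<noteq> {}" "open V'" "V' \<noteq> {}" and merged:
      "\<And>n. F n ` U' \<inter> V' \<noteq> {} \<Longrightarrow> F n ` U k \<inter> V k \<noteq> {} \<and> F n ` U i \<inter> V i \<noteq> {}"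
      using na_weakly_mixing_merge_pairs[OF cont comm wm k i] by metis
    then have "open ((U(k := U')) l) \<and> (U(k := U')) l \<noteq> {} \<and> open ((V(k := V')) l) \<and> (V(k := V')) l \<noteq> {}"
      if "l \<in> I" for l
      using insert.prems that by simp
    then obtain n where "n \<ge> 1" and n: "\<forall>l\<in>I. F n ` (U(k := U')) l \<inter> (V(k := V')) l \<noteq> {}"
      using insert.IH by blast
    have "F n ` U l \<inter> V l \<noteq> {}" if "l \<in> insert i I" for l
    proof (cases "l = k \<or> l = i")
      case True
      then show ?thesis
        using merged n \<open>k \<in> I\<close> by fastforce
    next
      case False
      then show ?thesis
        using n that by (metis fun_upd_other insertE)
    qed
    then show ?thesis
      using \<open>n \<ge> 1\<close> by blast
  qed
qed

lemma two_targets_imp_na_weakly_mixing: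
  fixes F :: "nat \<Rightarrow> 'a::topological_space \<Rightarrow> 'a"
  assumes cont: "\<And>n. continuous_on UNIV (F n)"
    and comm: "\<And>m n x. F m (F n x) = F n (F m x)"
    and two: "\<And>U V1 V2. open U \<Longrightarrow> U \<noteq> {} \<Longrightarrow> open V1 \<Longrightarrow> V1 \<noteq> {} \<Longrightarrow> open V2 \<Longrightarrow> V2 \<noteq> {} \<Longrightarrow>
       \<exists>n\<ge>1. F n ` U \<inter> V1 \<noteq> {} \<and> F n ` U \<inter> V2 \<noteq> {}"
  shows "na_weakly_mixing euclidean F"
  unfolding na_weakly_mixing_def
proof (intro allI impI)
  fix U1 U2 V1 V2 :: "'a set"
  assume "openin euclidean U1 \<and> U1 \<noteq> {} \<and> openin euclidean U2 \<and> U2 \<noteq> {} \<and>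
      openin euclidean V1 \<and> V1 \<noteq> {} \<and> openin euclidean V2 \<and> V2 \<noteq> {}"
  then have o: "open U1" "U1 \<noteq> {}" "open U2" "U2 \<noteq> {}" "open V1" "V1 \<noteq> {}" "open V2" "V2 \<noteq> {}"
    by auto
  obtain k where k: "F k ` U1 \<inter> U2 \<noteq> {}" "F k ` U1 \<inter> V2 \<noteq> {}"
    using two[OF o(1-4,7,8)] by blast
  define W where "W = U1 \<inter> F k -` U2"
  define Z where "Z = F k -` V2"
  have "open W" "W \<noteq> {}" "open Z" "Z \<noteq> {}"
    using o cont k unfolding W_def Z_def by (auto intro!: open_Int open_vimage)
  then obtain n where n: "n \<ge> 1" "F n ` W \<inter> V1 \<noteq> {}" "F n ` W \<inter> Z \<noteq> {}"
    using two[OF _ _ o(5,6)] by blast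
  then obtain y where "y \<in> U1" "F k y \<in> U2" "F k (F n y) \<in> V2"
    unfolding W_def Z_def by blast
  then have "F n ` U2 \<inter> V2 \<noteq> {}"
    using comm[of n k y] by auto
  then show "\<exists>n\<ge>1. F n ` U1 \<inter> V1 \<noteq> {} \<and> F n ` U2 \<inter> V2 \<noteq> {}"
    using n unfolding W_def by blast
qed

section \<open>Weak* topology and probability measures\<close>

definition weak_star_nbhd :: "('a::topological_space \<Rightarrow> real) set \<Rightarrow> real \<Rightarrow> 'a measure \<Rightarrow> 'a measure set"
  where "weak_star_nbhd G e \<mu> =
    {\<nu> \<in> prob_measures. \<forall>g\<in>G. \<bar>(\<integral>x. g x \<partial>\<nu>) - (\<integral>x. g x \<partial>\<mu>)\<bar> < e}"

lemma weak_star_nbhd_Un_min: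
  "weak_star_nbhd (G \<union> G') (min e e') \<mu> \<subseteq> weak_star_nbhd G e \<mu> \<inter> weak_star_nbhd G' e' \<mu>"
  unfolding weak_star_nbhd_def by auto

lemma openin_weak_star_subset: "openin weak_star_topology W \<Longrightarrow> W \<subseteq> prob_measures"
  by (drule openin_subset) (auto simp: weak_star_topology_def)

lemma openin_weak_star_basic:
  fixes g :: "'a::topological_space \<Rightarrow> real"
  assumes "continuous_on UNIV g" "open U"
  shows "openin weak_star_topology {M \<in> prob_measures. (\<integral>x. g x \<partial>M) \<in> U}"
  unfolding weak_star_topology_def
  by (rule topology_generated_by_Basis) (use assms in blast)

lemma openin_weak_star_imp_nbhd:
  fixes \<mu> :: "'a::topological_space measure"
  assumes "openin weak_star_topology W" "\<mu> \<in> W"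
  shows "\<exists>G e. finite G \<and> (\<forall>g\<in>G. continuous_on UNIV g) \<and> e > 0 \<and> weak_star_nbhd G e \<mu> \<subseteq> W"
proof -
  have "generate_topology_on
      {{M \<in> prob_measures. (\<integral>x. g x \<partial>M) \<in> U} | (g :: 'a \<Rightarrow> real) U. continuous_on UNIV g \<and> open U} W"
    using assms(1) unfolding weak_star_topology_def by (rule openin_topology_generated_by)
  then show ?thesis
    using assms(2)
  proof (induction arbitrary: \<mu>)
    case (Int a b)
    obtain Ga ea where Ga: "finite Ga" "\<forall>g\<in>Ga. continuous_on UNIV g" "ea > 0" "weak_star_nbhd Ga ea \<mu> \<subseteq> a"
      using Int.IH(1)[OF IntD1[OF Int.prems]] by blast
    obtain Gb eb where Gb: "finite Gb" "\<forall>g\<in>Gb. continuous_on UNIV g" "eb > 0" "weak_star_nbhd Gb eb \<mu> \<subseteq> b"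
      using Int.IH(2)[OF IntD2[OF Int.prems]] by blast
    have "finite (Ga \<union> Gb)" "\<forall>g\<in>Ga \<union> Gb. continuous_on UNIV g" "min ea eb > 0"
      using Ga(1-3) Gb(1-3) by auto
    moreover have "weak_star_nbhd (Ga \<union> Gb) (min ea eb) \<mu> \<subseteq> a \<inter> b"
      using weak_star_nbhd_Un_min Ga(4) Gb(4) by blast
    ultimately show ?case
      by blast
  next
    case (UN K)
    from UN.prems obtain k where k: "k \<in> K" "\<mu> \<in> k"
      by blast
    then have "k \<subseteq> \<Union>K"
      by blast
    then show ?case
      using UN.IH[OF k] by (meson order_trans)
  next
    case (Basis s)
    then obtain g :: "'a \<Rightarrow> real" and U where s: "s = {M \<in> prob_measures. (\<integral>x. g x \<partial>M) \<in> U}"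
      and g: "continuous_on UNIV g" and "open U"
      by blast
    moreover have "(\<integral>x. g x \<partial>\<mu>) \<in> U"
      using Basis.prems s by simp
    ultimately obtain e where "e > 0" "ball (\<integral>x. g x \<partial>\<mu>) e \<subseteq> U"
      using open_contains_ball by blast
    then have "weak_star_nbhd {g} e \<mu> \<subseteq> s"
      unfolding s weak_star_nbhd_def by (auto simp: dist_real_def abs_minus_commute)
    then show ?case
      using g \<open>e > 0\<close> by (intro exI[of _ "{g}"] exI[of _ e]) auto
  qed simp
qed

lemma openin_weak_star_imp_common_nbhd:
  fixes S :: "('a::topological_space measure set \<times> 'a measure) set"
  assumes "finite S" "\<And>W \<mu>. (W, \<mu>) \<in> S \<Longrightarrow> openin weak_star_topology W \<and> \<mu> \<in> W"
  shows "\<exists>G e. finite G \<and> (\<forall>g\<in>G. continuous_on UNIV g) \<and> e > 0 \<and>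
    (\<forall>(W, \<mu>)\<in>S. weak_star_nbhd G e \<mu> \<subseteq> W)"
  using assms
proof (induction S rule: finite_induct)
  case empty
  show ?case
    by (intro exI[of _ "{}"] exI[of _ 1]) simp
next
  case (insert p S)
  obtain W \<mu> where p: "p = (W, \<mu>)"
    by fastforce
  obtain G e where G: "finite G" "\<forall>g\<in>G. continuous_on UNIV g" "e > 0"
    "\<forall>(W, \<mu>)\<in>S. weak_star_nbhd G e \<mu> \<subseteq> W"
    using insert.IH insert.prems by (metis insertCI)
  obtain G' e' where G': "finite G'" "\<forall>g\<in>G'. continuous_on UNIV g" "e' > 0"
    "weak_star_nbhd G' e' \<mu> \<subseteq> W"
    using openin_weak_star_imp_nbhd insert.prems[of W \<mu>] p by (metis insertI1)
  have "finite (G \<union> G')" "\<forall>g\<in>G \<union> G'. continuous_on UNIV g" "min e e' > 0"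
    using G(1-3) G'(1-3) by auto
  moreover have "\<forall>(W, \<mu>)\<in>insert p S. weak_star_nbhd (G \<union> G') (min e e') \<mu> \<subseteq> W"
    using G(4) G'(4) weak_star_nbhd_Un_min[of G G' e e'] p by fastforce
  ultimately show ?case
    by blast
qed

lemma prob_measuresD:
  "M \<in> prob_measures \<Longrightarrow> sets M = sets borel"
  "M \<in> prob_measures \<Longrightarrow> prob_space M"
  unfolding prob_measures_def by auto

lemma measurable_continuous_prob_measures:
  "M \<in> prob_measures \<Longrightarrow> continuous_on UNIV h \<Longrightarrow> h \<in> M \<rightarrow>\<^sub>M borel"
  using borel_measurable_continuous_onI measurable_cong_sets[OF prob_measuresD(1) refl] by blast

lemma distr_in_prob_measures:
  assumes "M \<in> prob_measures" "continuous_on UNIV F"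
  shows "distr M borel F \<in> prob_measures"
  using prob_space.prob_space_distr[OF prob_measuresD(2) measurable_continuous_prob_measures]
    assms unfolding prob_measures_def by auto

lemma integral_distr_continuous:
  fixes g :: "'a::topological_space \<Rightarrow> real"
  assumes "M \<in> prob_measures" "continuous_on UNIV F" "continuous_on UNIV g"
  shows "(\<integral>x. g x \<partial>distr M borel F) = (\<integral>x. g (F x) \<partial>M)"
  by (rule integral_distr[OF measurable_continuous_prob_measures[OF assms(1,2)]
        borel_measurable_continuous_onI[OF assms(3)]])

lemma return_in_prob_measures: "return borel x \<in> prob_measures"
  unfolding prob_measures_def by (auto intro: prob_space_return)

lemma integrable_continuous_prob_measures:
  fixes g :: "'a::topological_space \<Rightarrow> real"
  assumes "M \<in> prob_measures" "continuous_on UNIV g" "\<And>x. \<bar>g x\<bar> \<le> B"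
  shows "integrable M g"
proof -
  interpret prob_space M
    using assms(1) by (rule prob_measuresD(2))
  show ?thesis
    using measurable_continuous_prob_measures[OF assms(1,2)] assms(3)
    by (intro integrable_const_bound[where B = B]) auto
qed

lemma two_point_measure:
  fixes a b :: "'a::topological_space"
  defines "M \<equiv> distr (measure_pmf (pmf_of_set {a, b})) borel id"
  shows "M \<in> prob_measures"
    and "\<And>g :: 'a \<Rightarrow> real. continuous_on UNIV g \<Longrightarrow> (\<And>x. 0 \<le> g x) \<Longrightarrow>
      g a / 2 \<le> (\<integral>x. g x \<partial>M) \<and> g b / 2 \<le> (\<integral>x. g x \<partial>M)"
proof -
  show "M \<in> prob_measures"
    unfolding M_def prob_measures_def by (auto intro: measure_pmf.prob_space_distr)
  fix g :: "'a \<Rightarrow> real"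
  assume g: "continuous_on UNIV g" "\<And>x. 0 \<le> g x"
  have "(\<integral>x. g x \<partial>M) = (\<Sum>x\<in>{a, b}. g x) / card {a, b}"
    unfolding M_def
    by (subst integral_distr[OF _ borel_measurable_continuous_onI[OF g(1)]])
      (simp_all add: integral_pmf_of_set)
  then show "g a / 2 \<le> (\<integral>x. g x \<partial>M) \<and> g b / 2 \<le> (\<integral>x. g x \<partial>M)"
    using g(2)[of a] g(2)[of b] by (cases "a = b") auto
qed

lemma distr_pair_measure_fst_snd:
  assumes "\<mu> \<in> prob_measures" "\<nu> \<in> prob_measures"
  shows "distr (\<mu> \<Otimes>\<^sub>M \<nu>) borel fst = \<mu>" "distr (\<mu> \<Otimes>\<^sub>M \<nu>) borel snd = \<nu>"
proof -
  interpret \<mu>: prob_space \<mu>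
    using assms(1) by (rule prob_measuresD(2))
  interpret \<nu>: prob_space \<nu>
    using assms(2) by (rule prob_measuresD(2))
  interpret pair_sigma_finite \<mu> \<nu> ..
  have "distr (\<mu> \<Otimes>\<^sub>M \<nu>) borel fst = distr (\<mu> \<Otimes>\<^sub>M \<nu>) \<mu> fst"
    using prob_measuresD(1)[OF assms(1)] by (intro distr_cong) simp_all
  also have "\<dots> = \<mu>"
    by (rule \<nu>.distr_pair_fst)
  finally show "distr (\<mu> \<Otimes>\<^sub>M \<nu>) borel fst = \<mu>" .
  have "distr (\<mu> \<Otimes>\<^sub>M \<nu>) borel snd = distr (distr (\<nu> \<Otimes>\<^sub>M \<mu>) (\<mu> \<Otimes>\<^sub>M \<nu>) (\<lambda>(x, y). (y, x))) \<nu> snd"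
    using prob_measuresD(1)[OF assms(2)] distr_pair_swap by (intro distr_cong) simp_all
  also have "\<dots> = distr (\<nu> \<Otimes>\<^sub>M \<mu>) \<nu> fst"
    by (subst distr_distr) (auto intro!: distr_cong)
  also have "\<dots> = \<nu>"
    by (rule \<mu>.distr_pair_fst)
  finally show "distr (\<mu> \<Otimes>\<^sub>M \<nu>) borel snd = \<nu>" .
qed

lemma integral_distr_close:
  fixes g :: "'a::topological_space \<Rightarrow> real"
  assumes P: "prob_space P" and h: "h \<in> P \<rightarrow>\<^sub>M borel" and \<pi>: "\<pi> \<in> P \<rightarrow>\<^sub>M borel"
    and g: "continuous_on UNIV g" "\<And>x. \<bar>g x\<bar> \<le> B"
    and close: "\<And>p. p \<in> space P \<Longrightarrow> \<bar>g (h p) - g (\<pi> p)\<bar> \<le> r"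
  shows "\<bar>(\<integral>x. g x \<partial>distr P borel h) - (\<integral>x. g x \<partial>distr P borel \<pi>)\<bar> \<le> r"
proof -
  interpret prob_space P by fact
  have gm: "g \<in> borel_measurable borel"
    using g(1) by (rule borel_measurable_continuous_onI)
  have int: "integrable P (\<lambda>p. g (h p))" "integrable P (\<lambda>p. g (\<pi> p))"
    using measurable_compose[OF h gm] measurable_compose[OF \<pi> gm] g(2)
    by (auto intro!: integrable_const_bound[where B = B])
  have "\<bar>(\<integral>p. g (h p) \<partial>P) - (\<integral>p. g (\<pi> p) \<partial>P)\<bar> = \<bar>\<integral>p. g (h p) - g (\<pi> p) \<partial>P\<bar>"
    using int by simp
  also have "\<dots> \<le> (\<integral>p. \<bar>g (h p) - g (\<pi> p)\<bar> \<partial>P)"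
    using integral_norm_bound[of P "\<lambda>p. g (h p) - g (\<pi> p)"] by simp
  also have "\<dots> \<le> (\<integral>p. r \<partial>P)"
    using int close by (intro integral_mono) auto
  also have "\<dots> = r"
    by (simp add: prob_space)
  finally show ?thesis
    using integral_distr[OF h gm] integral_distr[OF \<pi> gm] by simp
qed

section \<open>Transitivity on measures implies weak mixing\<close>

lemma bump_function:
  fixes U :: "'a::metric_space set"
  assumes "open U" "U \<noteq> {}"
  obtains u and \<phi> :: "'a \<Rightarrow> real" where "continuous_on UNIV \<phi>" "\<phi> u = 1"
    "\<And>x. 0 \<le> \<phi> x" "\<And>x. \<phi> x \<le> 1" "\<And>x. \<phi> x \<noteq> 0 \<Longrightarrow> x \<in> U"
proof -
  obtain u r where "r > 0" "ball u r \<subseteq> U"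
    using assms open_contains_ball by blast
  define \<phi> where "\<phi> x = max 0 (1 - dist x u / r)" for x
  have "continuous_on UNIV \<phi>"
    unfolding \<phi>_def by (intro continuous_intros) (use \<open>r > 0\<close> in auto)
  moreover have "x \<in> U" if "\<phi> x \<noteq> 0" for x
  proof -
    have "1 - dist x u / r > 0"
      using that unfolding \<phi>_def by (cases "1 - dist x u / r \<le> 0") auto
    then have "dist u x < r"
      using \<open>r > 0\<close> by (simp add: dist_commute field_simps)
    then show ?thesis
      using \<open>ball u r \<subseteq> U\<close> by auto
  qed
  moreover have "\<phi> u = 1" "\<And>x. 0 \<le> \<phi> x" "\<And>x. \<phi> x \<le> 1"
    using \<open>r > 0\<close> by (auto simp: \<phi>_def)
  ultimately show ?thesis
    using that by blast
qed

text \<open>If \<open>F\<close> maps no point of \<open>U\<close> into \<open>V\<close>, the mass \<open>M\<close> puts near \<open>U\<close> and the mass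
  \<open>F\<^sub>*M\<close> puts near \<open>V\<close> come from disjoint parts of \<open>M\<close>.\<close>
lemma image_meets_if_mass_gt_one:
  fixes \<phi> \<psi> :: "'a::topological_space \<Rightarrow> real"
  assumes M: "M \<in> prob_measures" and F: "continuous_on UNIV F"
    and \<phi>: "continuous_on UNIV \<phi>" "\<And>x. 0 \<le> \<phi> x" "\<And>x. \<phi> x \<le> 1" "\<And>x. \<phi> x \<noteq> 0 \<Longrightarrow> x \<in> U"
    and \<psi>: "continuous_on UNIV \<psi>" "\<And>x. 0 \<le> \<psi> x" "\<And>x. \<psi> x \<le> 1" "\<And>x. \<psi> x \<noteq> 0 \<Longrightarrow> x \<in> V"
    and mass: "(\<integral>x. \<phi> x \<partial>M) + (\<integral>x. \<psi> x \<partial>distr M borel F) > 1"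
  shows "F ` U \<inter> V \<noteq> {}"
proof
  assume disj: "F ` U \<inter> V = {}"
  interpret prob_space M
    using M by (rule prob_measuresD(2))
  have \<psi>F: "continuous_on UNIV (\<lambda>x. \<psi> (F x))"
    using continuous_on_compose2[OF \<psi>(1) F] by simp
  have "\<phi> x + \<psi> (F x) \<le> 1" for x
  proof (cases "\<phi> x = 0")
    case False
    then have "\<psi> (F x) = 0"
      using disj \<phi>(4) \<psi>(4) by blast
    then show ?thesis
      using \<phi>(3) by simp
  qed (use \<psi>(3) in simp)
  then have "(\<integral>x. \<phi> x + \<psi> (F x) \<partial>M) \<le> (\<integral>x. 1 \<partial>M)"
    using integrable_continuous_prob_measures[OF M \<phi>(1), of 1]
      integrable_continuous_prob_measures[OF M \<psi>F, of 1] \<phi>(2,3) \<psi>(2,3)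
    by (intro integral_mono) (auto simp: abs_le_iff)
  then show False
    using mass integrable_continuous_prob_measures[OF M \<phi>(1), of 1]
      integrable_continuous_prob_measures[OF M \<psi>F, of 1] \<phi>(2,3) \<psi>(2,3)
      integral_distr_continuous[OF M F \<psi>(1)]
    by (simp add: abs_le_iff prob_space)
qed

text \<open>A measure giving \<open>U\<close> most of its mass is carried by the transitivity of the induced
  system to one giving both \<open>V1\<close> and \<open>V2\<close> a third of it.\<close>
lemma na_transitive_distr_imp_two_targets:
  fixes F :: "nat \<Rightarrow> 'a::metric_space \<Rightarrow> 'a"
  assumes cont: "\<And>n. continuous_on UNIV (F n)"
    and tr: "na_transitive weak_star_topology (\<lambda>n M. distr M borel (F n))"
    and U: "open U" "U \<noteq> {}" and V1: "open V1" "V1 \<noteq> {}" and V2: "open V2" "V2 \<noteq> {}"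
  shows "\<exists>n\<ge>1. F n ` U \<inter> V1 \<noteq> {} \<and> F n ` U \<inter> V2 \<noteq> {}"
proof -
  obtain \<phi> :: "'a \<Rightarrow> real" and u where \<phi>: "continuous_on UNIV \<phi>" "\<phi> u = 1"
    "\<And>x. 0 \<le> \<phi> x" "\<And>x. \<phi> x \<le> 1" "\<And>x. \<phi> x \<noteq> 0 \<Longrightarrow> x \<in> U"
    using bump_function[OF U] by metis
  obtain \<psi>1 :: "'a \<Rightarrow> real" and v1 where \<psi>1: "continuous_on UNIV \<psi>1" "\<psi>1 v1 = 1"
    "\<And>x. 0 \<le> \<psi>1 x" "\<And>x. \<psi>1 x \<le> 1" "\<And>x. \<psi>1 x \<noteq> 0 \<Longrightarrow> x \<in> V1"
    using bump_function[OF V1] by metis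
  obtain \<psi>2 :: "'a \<Rightarrow> real" and v2 where \<psi>2: "continuous_on UNIV \<psi>2" "\<psi>2 v2 = 1"
    "\<And>x. 0 \<le> \<psi>2 x" "\<And>x. \<psi>2 x \<le> 1" "\<And>x. \<psi>2 x \<noteq> 0 \<Longrightarrow> x \<in> V2"
    using bump_function[OF V2] by metis
  define A where "A = {M \<in> prob_measures. (\<integral>x. \<phi> x \<partial>M) \<in> {2/3<..}}"
  define B where "B = {M \<in> prob_measures. (\<integral>x. \<psi>1 x \<partial>M) \<in> {1/3<..}} \<inter>
    {M \<in> prob_measures. (\<integral>x. \<psi>2 x \<partial>M) \<in> {1/3<..}}"
  have "openin weak_star_topology A"
    unfolding A_def by (intro openin_weak_star_basic \<phi>(1)) simp
  moreover have "openin weak_star_topology B"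
    unfolding B_def by (intro openin_Int openin_weak_star_basic \<psi>1(1) \<psi>2(1)) simp_all
  moreover have "return borel u \<in> A"
    using return_in_prob_measures[of u] \<phi>(2)
      integral_return[of u borel \<phi>, OF _ borel_measurable_continuous_onI[OF \<phi>(1)]]
    by (simp add: A_def)
  moreover have "distr (measure_pmf (pmf_of_set {v1, v2})) borel id \<in> B"
    using two_point_measure(1)[of v1 v2] two_point_measure(2)[OF \<psi>1(1,3), of v1 v2]
      two_point_measure(2)[OF \<psi>2(1,3), of v1 v2] \<psi>1(2) \<psi>2(2)
    by (simp add: B_def)
  ultimately have "\<exists>n\<ge>1. (\<lambda>M. distr M borel (F n)) ` A \<inter> B \<noteq> {}"
    using tr[unfolded na_transitive_def, rule_format, of A B] by blast
  then obtain n M where n: "n \<ge> 1" "M \<in> A" "distr M borel (F n) \<in> B"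
    by blast
  then have M: "M \<in> prob_measures" "(\<integral>x. \<phi> x \<partial>M) > 2/3"
    by (simp_all add: A_def)
  have "(\<integral>x. \<psi>1 x \<partial>distr M borel (F n)) > 1/3" "(\<integral>x. \<psi>2 x \<partial>distr M borel (F n)) > 1/3"
    using n(3) by (simp_all add: B_def)
  then have "F n ` U \<inter> V1 \<noteq> {}" "F n ` U \<inter> V2 \<noteq> {}"
    using image_meets_if_mass_gt_one[OF M(1) cont \<phi>(1,3-5) \<psi>1(1,3-5)]
      image_meets_if_mass_gt_one[OF M(1) cont \<phi>(1,3-5) \<psi>2(1,3-5)] M(2)
    by simp_all
  then show ?thesis
    using n(1) by blast
qed

section \<open>Weak mixing lifts to measures\<close>

lemma bounded_continuous_compact_UNIV:
  fixes g :: "'a::topological_space \<Rightarrow> real"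
  assumes "compact (UNIV :: 'a set)" "continuous_on UNIV g"
  obtains B where "\<And>x. \<bar>g x\<bar> \<le> B"
  using compact_imp_bounded[OF compact_continuous_image[OF assms(2,1)]] that
  unfolding bounded_real by blast

lemma finite_family_uniform_modulus:
  fixes G :: "('a::metric_space \<Rightarrow> real) set"
  assumes "compact (UNIV :: 'a set)" "finite G" "\<And>g. g \<in> G \<Longrightarrow> continuous_on UNIV g" "e > 0"
  obtains \<delta> where "\<delta> > 0" "\<And>g x y. g \<in> G \<Longrightarrow> dist x y < \<delta> \<Longrightarrow> \<bar>g x - g y\<bar> < e"
proof -
  have "\<exists>\<delta>>0. \<forall>x y. dist x y < \<delta> \<longrightarrow> \<bar>g x - g y\<bar> < e" if "g \<in> G" for g
  proof -
    have "uniformly_continuous_on UNIV g"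
      using compact_uniformly_continuous assms(1,3) that by blast
    then show ?thesis
      using assms(4) unfolding uniformly_continuous_on_def dist_real_def by blast
  qed
  then obtain \<delta> where \<delta>: "\<And>g. g \<in> G \<Longrightarrow> \<delta> g > 0" "\<And>g x y. g \<in> G \<Longrightarrow> dist x y < \<delta> g \<Longrightarrow> \<bar>g x - g y\<bar> < e"
    by metis
  define \<delta>0 where "\<delta>0 = Min (insert 1 (\<delta> ` G))"
  have "\<delta>0 > 0"
    using assms(2) \<delta>(1) by (auto simp: \<delta>0_def)
  have le: "\<delta>0 \<le> \<delta> g" if "g \<in> G" for g
    using assms(2) that by (simp add: \<delta>0_def)
  show ?thesis
  proof (rule that[OF \<open>\<delta>0 > 0\<close>])
    fix g and x y :: 'a
    assume "g \<in> G" "dist x y < \<delta>0"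
    then show "\<bar>g x - g y\<bar> < e"
      using \<delta>(2) le less_le_trans by blast
  qed
qed

lemma compact_UNIV_finite_net:
  assumes "compact (UNIV :: 'a set)" "d > 0"
  obtains m and c :: "nat \<Rightarrow> 'a::metric_space" where "\<And>x. \<exists>a<m. dist x (c a) < d"
proof -
  have "UNIV \<subseteq> (\<Union>c\<in>UNIV. ball c d)"
    using assms(2) by (auto intro!: UN_I)
  then obtain C :: "'a set" where "finite C" "UNIV \<subseteq> (\<Union>c\<in>C. ball c d)"
    using compactE_image[OF assms(1)] by (metis open_ball)
  moreover obtain xs where "set xs = C"
    using finite_list \<open>finite C\<close> by blast
  ultimately have "\<exists>a<length xs. dist x (xs ! a) < d" for x
  proof -
    obtain y where "y \<in> C" "x \<in> ball y d"
      using \<open>UNIV \<subseteq> (\<Union>c\<in>C. ball c d)\<close> by blast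
    moreover obtain a where "a < length xs" "xs ! a = y"
      using \<open>y \<in> C\<close> \<open>set xs = C\<close> by (metis in_set_conv_nth)
    ultimately show ?thesis
      by (auto simp: dist_commute)
  qed
  then show ?thesis
    using that by blast
qed

lemma measurable_nearest_index:
  fixes c :: "nat \<Rightarrow> 'a::metric_space"
  shows "(\<lambda>x. LEAST a. dist x (c a) < d) \<in> borel \<rightarrow>\<^sub>M count_space UNIV"
proof (rule measurable_Least)
  fix a
  have "(\<lambda>x. dist x (c a)) \<in> borel_measurable borel"
    by (intro borel_measurable_continuous_onI continuous_intros)
  then show "(\<lambda>x. dist x (c a) < d) \<in> borel \<rightarrow>\<^sub>M count_space UNIV"
    by (rule borel_measurable_pred_less) simp
qed

text \<open>\<open>Z (x, y)\<close> is a point that \<open>F\<close> carries from the net cell of \<open>x\<close> to that of \<open>y\<close>;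
  choosing cells by their least index makes \<open>Z\<close> measurable.\<close>
lemma shadowing_map:
  fixes F :: "'a::metric_space \<Rightarrow> 'a" and c :: "nat \<Rightarrow> 'a"
  assumes net: "\<And>x. \<exists>a<m. dist x (c a) < d"
    and hit: "\<And>a b. a < m \<Longrightarrow> b < m \<Longrightarrow> F ` ball (c a) d \<inter> ball (c b) d \<noteq> {}"
  obtains Z where "Z \<in> borel \<Otimes>\<^sub>M borel \<rightarrow>\<^sub>M borel"
    "\<And>p. dist (Z p) (fst p) < 2 * d" "\<And>p. dist (F (Z p)) (snd p) < 2 * d"
proof -
  define idx where "idx x = (LEAST a. dist x (c a) < d)" for x
  have idx: "idx x < m" "dist x (c (idx x)) < d" for x
  proof -
    obtain a where a: "a < m" "dist x (c a) < d"
      using net by blast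
    show "dist x (c (idx x)) < d"
      unfolding idx_def by (rule LeastI[of _ a]) (rule a(2))
    have "idx x \<le> a"
      unfolding idx_def by (rule Least_le) (rule a(2))
    then show "idx x < m"
      using a(1) by simp
  qed
  have "\<exists>x. dist (c a) x < d \<and> dist (c b) (F x) < d" if "a < m" "b < m" for a b
    using hit[OF that] by auto
  then obtain z where z: "\<And>a b. a < m \<Longrightarrow> b < m \<Longrightarrow> dist (c a) (z a b) < d \<and> dist (c b) (F (z a b)) < d"
    by metis
  define Z where "Z p = z (idx (fst p)) (idx (snd p))" for p
  have [measurable]: "idx \<in> borel \<rightarrow>\<^sub>M count_space UNIV"
    unfolding idx_def by (rule measurable_nearest_index)
  have "Z \<in> borel \<Otimes>\<^sub>M borel \<rightarrow>\<^sub>M borel"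
    unfolding Z_def by measurable
  moreover have "dist (Z p) (fst p) < 2 * d" "dist (F (Z p)) (snd p) < 2 * d" for p
    using z[OF idx(1) idx(1), of "fst p" "snd p"] idx(2)[of "fst p"] idx(2)[of "snd p"]
      dist_triangle3[of "Z p" "fst p" "c (idx (fst p))"]
      dist_triangle3[of "F (Z p)" "snd p" "c (idx (snd p))"]
    unfolding Z_def by (simp_all add: dist_commute)
  ultimately show ?thesis
    using that by blast
qed

text \<open>Pushing \<open>\<mu> \<otimes> \<nu>\<close> forward along \<open>Z\<close> couples \<open>\<mu>\<close> with \<open>\<nu>\<close> through \<open>F\<close>: the first marginal
  of \<open>\<mu> \<otimes> \<nu>\<close> is \<open>\<mu>\<close> and is moved little by \<open>Z\<close>, the second is \<open>\<nu>\<close> and is moved little by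
  \<open>F \<circ> Z\<close>.\<close>
lemma distr_coupling_in_weak_star_nbhds:
  fixes F Z :: "_ \<Rightarrow> 'a::metric_space" and G :: "('a \<Rightarrow> real) set"
  assumes cpt: "compact (UNIV :: 'a set)" and F: "continuous_on UNIV F"
    and G: "\<And>g. g \<in> G \<Longrightarrow> continuous_on UNIV g"
    and \<mu>: "\<mu> \<in> prob_measures" and \<nu>: "\<nu> \<in> prob_measures"
    and Zb: "Z \<in> borel \<Otimes>\<^sub>M borel \<rightarrow>\<^sub>M borel"
    and close: "\<And>g p. g \<in> G \<Longrightarrow> \<bar>g (Z p) - g (fst p)\<bar> \<le> r" "\<And>g p. g \<in> G \<Longrightarrow> \<bar>g (F (Z p)) - g (snd p)\<bar> \<le> r"
    and "r < e"
  shows "distr (\<mu> \<Otimes>\<^sub>M \<nu>) borel Z \<in> weak_star_nbhd G e \<mu>"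
    and "distr (distr (\<mu> \<Otimes>\<^sub>M \<nu>) borel Z) borel F \<in> weak_star_nbhd G e \<nu>"
proof -
  define P where "P = \<mu> \<Otimes>\<^sub>M \<nu>"
  interpret \<mu>: prob_space \<mu>
    using \<mu> by (rule prob_measuresD(2))
  interpret \<nu>: prob_space \<nu>
    using \<nu> by (rule prob_measuresD(2))
  interpret P: pair_prob_space \<mu> \<nu> ..
  have prob_P: "prob_space P"
    unfolding P_def by (rule P.prob_space_axioms)
  have sets_P: "sets P = sets (borel \<Otimes>\<^sub>M borel)"
    unfolding P_def using prob_measuresD(1)[OF \<mu>] prob_measuresD(1)[OF \<nu>]
    by (intro sets_pair_measure_cong)
  have Zm: "Z \<in> P \<rightarrow>\<^sub>M borel" and FZm: "(\<lambda>p. F (Z p)) \<in> P \<rightarrow>\<^sub>M borel"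
    using Zb measurable_compose[OF Zb borel_measurable_continuous_onI[OF F]]
    by (simp_all add: measurable_cong_sets[OF sets_P refl])
  have fstm: "fst \<in> P \<rightarrow>\<^sub>M borel" and sndm: "snd \<in> P \<rightarrow>\<^sub>M borel"
    using measurable_fst measurable_snd by (simp_all add: measurable_cong_sets[OF sets_P refl])
  have M: "distr P borel Z \<in> prob_measures"
    unfolding prob_measures_def using prob_space.prob_space_distr[OF prob_P Zm] by simp
  have FM: "distr (distr P borel Z) borel F = distr P borel (\<lambda>p. F (Z p))"
    using Zm borel_measurable_continuous_onI[OF F] by (subst distr_distr) (simp_all add: comp_def)
  have "\<bar>(\<integral>x. g x \<partial>distr P borel Z) - (\<integral>x. g x \<partial>distr P borel fst)\<bar> \<le> r"
    "\<bar>(\<integral>x. g x \<partial>distr P borel (\<lambda>p. F (Z p))) - (\<integral>x. g x \<partial>distr P borel snd)\<bar> \<le> r"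
    if g: "g \<in> G" for g
  proof -
    obtain B where B: "\<And>x. \<bar>g x\<bar> \<le> B"
      using bounded_continuous_compact_UNIV[OF cpt G[OF g]] by blast
    show "\<bar>(\<integral>x. g x \<partial>distr P borel Z) - (\<integral>x. g x \<partial>distr P borel fst)\<bar> \<le> r"
      by (rule integral_distr_close[OF prob_P Zm fstm G[OF g] B]) (rule close(1)[OF g])
    show "\<bar>(\<integral>x. g x \<partial>distr P borel (\<lambda>p. F (Z p))) - (\<integral>x. g x \<partial>distr P borel snd)\<bar> \<le> r"
      by (rule integral_distr_close[OF prob_P FZm sndm G[OF g] B]) (rule close(2)[OF g])
  qed
  then have "distr P borel Z \<in> weak_star_nbhd G e \<mu>"
    and "distr (distr P borel Z) borel F \<in> weak_star_nbhd G e \<nu>"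
    using \<open>r < e\<close> M distr_in_prob_measures[OF M F] distr_pair_measure_fst_snd[OF \<mu> \<nu>, folded P_def]
    unfolding weak_star_nbhd_def FM by fastforce+
  then show "distr (\<mu> \<Otimes>\<^sub>M \<nu>) borel Z \<in> weak_star_nbhd G e \<mu>"
    and "distr (distr (\<mu> \<Otimes>\<^sub>M \<nu>) borel Z) borel F \<in> weak_star_nbhd G e \<nu>"
    unfolding P_def .
qed

text \<open>The time \<open>n\<close> is chosen before the measures: it only has to make \<open>F n\<close> connect all
  pairs of cells of a net fine enough for the finitely many test functions.\<close>
lemma na_weakly_mixing_imp_uniform_distr_nbhds:
  fixes F :: "nat \<Rightarrow> 'a::metric_space \<Rightarrow> 'a" and G :: "('a \<Rightarrow> real) set"
  assumes cpt: "compact (UNIV :: 'a set)" and cont: "\<And>n. continuous_on UNIV (F n)"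
    and comm: "\<And>m n x. F m (F n x) = F n (F m x)"
    and wm: "na_weakly_mixing euclidean F"
    and G: "finite G" "\<And>g. g \<in> G \<Longrightarrow> continuous_on UNIV g" and "e > 0"
  obtains n where "n \<ge> 1" "\<And>\<mu> \<nu>. \<mu> \<in> prob_measures \<Longrightarrow> \<nu> \<in> prob_measures \<Longrightarrow>
    \<exists>M\<in>weak_star_nbhd G e \<mu>. distr M borel (F n) \<in> weak_star_nbhd G e \<nu>"
proof -
  obtain \<delta> where "\<delta> > 0" and \<delta>: "\<And>g x y. g \<in> G \<Longrightarrow> dist x y < \<delta> \<Longrightarrow> \<bar>g x - g y\<bar> < e / 2"
    using finite_family_uniform_modulus[OF cpt G] \<open>e > 0\<close> by (metis half_gt_zero)
  define d where "d = \<delta> / 2"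
  have "d > 0"
    using \<open>\<delta> > 0\<close> by (simp add: d_def)
  then obtain m and c :: "nat \<Rightarrow> 'a" where net: "\<And>x. \<exists>a<m. dist x (c a) < d"
    using compact_UNIV_finite_net[OF cpt] by blast
  obtain n where "n \<ge> 1" and
    hits: "\<forall>p\<in>{..<m} \<times> {..<m}. F n ` ball (c (fst p)) d \<inter> ball (c (snd p)) d \<noteq> {}"
    using na_weakly_mixing_finite_family[OF cont comm wm, of "{..<m} \<times> {..<m}"
        "\<lambda>p. ball (c (fst p)) d" "\<lambda>p. ball (c (snd p)) d"] \<open>d > 0\<close>
    by auto
  have hit: "F n ` ball (c a) d \<inter> ball (c b) d \<noteq> {}" if "a < m" "b < m" for a b
    using hits that by force
  obtain Z where Z: "Z \<in> borel \<Otimes>\<^sub>M borel \<rightarrow>\<^sub>M borel"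
    and dist_Z: "\<And>p. dist (Z p) (fst p) < 2 * d" "\<And>p. dist (F n (Z p)) (snd p) < 2 * d"
    using shadowing_map[OF net hit] by metis
  have close: "\<bar>g (Z p) - g (fst p)\<bar> \<le> e / 2" "\<bar>g (F n (Z p)) - g (snd p)\<bar> \<le> e / 2"
    if "g \<in> G" for g p
    using \<delta>[OF that, of "Z p" "fst p"] \<delta>[OF that, of "F n (Z p)" "snd p"] dist_Z[of p]
    by (simp_all add: d_def)
  have "e / 2 < e"
    using \<open>e > 0\<close> by simp
  show ?thesis
    using that[OF \<open>n \<ge> 1\<close>]
      distr_coupling_in_weak_star_nbhds[OF cpt cont G(2) _ _ Z close \<open>e / 2 < e\<close>]
    by blast
qed

lemma na_weakly_mixing_imp_na_weakly_mixing_distr: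
  fixes F :: "nat \<Rightarrow> 'a::metric_space \<Rightarrow> 'a"
  assumes cpt: "compact (UNIV :: 'a set)" and cont: "\<And>n. continuous_on UNIV (F n)"
    and comm: "\<And>m n x. F m (F n x) = F n (F m x)"
    and wm: "na_weakly_mixing euclidean F"
  shows "na_weakly_mixing weak_star_topology (\<lambda>n M. distr M borel (F n))"
  unfolding na_weakly_mixing_def
proof (intro allI impI)
  fix A1 A2 B1 B2 :: "'a measure set"
  assume "openin weak_star_topology A1 \<and> A1 \<noteq> {} \<and> openin weak_star_topology A2 \<and> A2 \<noteq> {} \<and>
    openin weak_star_topology B1 \<and> B1 \<noteq> {} \<and> openin weak_star_topology B2 \<and> B2 \<noteq> {}"
  then obtain \<mu>1 \<mu>2 \<nu>1 \<nu>2 where \<mu>\<nu>: "\<mu>1 \<in> A1" "\<mu>2 \<in> A2" "\<nu>1 \<in> B1" "\<nu>2 \<in> B2"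
    and "openin weak_star_topology A1" "openin weak_star_topology A2"
      "openin weak_star_topology B1" "openin weak_star_topology B2"
    by blast
  then have prob: "\<mu>1 \<in> prob_measures" "\<mu>2 \<in> prob_measures" "\<nu>1 \<in> prob_measures" "\<nu>2 \<in> prob_measures"
    using openin_weak_star_subset by blast+
  have "\<exists>G e. finite G \<and> (\<forall>g\<in>G. continuous_on UNIV g) \<and> e > 0 \<and>
    (\<forall>(W, \<mu>)\<in>{(A1, \<mu>1), (A2, \<mu>2), (B1, \<nu>1), (B2, \<nu>2)}. weak_star_nbhd G e \<mu> \<subseteq> W)"
    using \<open>openin weak_star_topology A1\<close> \<open>openin weak_star_topology A2\<close>
      \<open>openin weak_star_topology B1\<close> \<open>openin weak_star_topology B2\<close> \<mu>\<nu>
    by (intro openin_weak_star_imp_common_nbhd) auto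
  then obtain G e where G: "finite G" "\<forall>g\<in>G. continuous_on UNIV g" "e > 0"
    and "\<forall>(W, \<mu>)\<in>{(A1, \<mu>1), (A2, \<mu>2), (B1, \<nu>1), (B2, \<nu>2)}. weak_star_nbhd G e \<mu> \<subseteq> W"
    by blast
  then have nbhds: "weak_star_nbhd G e \<mu>1 \<subseteq> A1" "weak_star_nbhd G e \<mu>2 \<subseteq> A2"
    "weak_star_nbhd G e \<nu>1 \<subseteq> B1" "weak_star_nbhd G e \<nu>2 \<subseteq> B2"
    by simp_all
  obtain n where "n \<ge> 1" and n: "\<And>\<mu> \<nu>. \<mu> \<in> prob_measures \<Longrightarrow> \<nu> \<in> prob_measures \<Longrightarrow>
      \<exists>M\<in>weak_star_nbhd G e \<mu>. distr M borel (F n) \<in> weak_star_nbhd G e \<nu>"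
    using na_weakly_mixing_imp_uniform_distr_nbhds[OF cpt cont comm wm G(1) _ G(3)] G(2) by metis
  obtain M1 M2 where "M1 \<in> A1" "distr M1 borel (F n) \<in> B1" "M2 \<in> A2" "distr M2 borel (F n) \<in> B2"
    using n[OF prob(1,3)] n[OF prob(2,4)] nbhds by blast
  then show "\<exists>n\<ge>1. (\<lambda>M. distr M borel (F n)) ` A1 \<inter> B1 \<noteq> {} \<and> (\<lambda>M. distr M borel (F n)) ` A2 \<inter> B2 \<noteq> {}"
    using \<open>n \<ge> 1\<close> by blast
qed

theorem theorem3p5:
  fixes f :: "nat \<Rightarrow> 'a::metric_space \<Rightarrow> 'a"
  assumes "compact (UNIV :: 'a set)"
    and "\<And>n. n \<ge> 1 \<Longrightarrow> continuous_on UNIV (f n)"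
    and "commutative_seq f"
  shows "(na_weakly_mixing euclidean (comp_seq f)
            \<longleftrightarrow> na_weakly_mixing weak_star_topology (induced_comp f))
       \<and> (na_weakly_mixing weak_star_topology (induced_comp f)
            \<longleftrightarrow> na_transitive weak_star_topology (induced_comp f))"
proof -
  have cont: "\<And>n. continuous_on UNIV (comp_seq f n)"
    using assms(2) by (rule continuous_on_comp_seq)
  have comm: "\<And>m n x. comp_seq f m (comp_seq f n x) = comp_seq f n (comp_seq f m x)"
    using assms(3) by (rule comp_seq_commute)
  have induced: "induced_comp f = (\<lambda>n M. distr M borel (comp_seq f n))"
    by (simp add: fun_eq_iff induced_comp_def)
  have "na_weakly_mixing euclidean (comp_seq f) \<Longrightarrow>
      na_weakly_mixing weak_star_topology (induced_comp f)"
    unfolding induced by (rule na_weakly_mixing_imp_na_weakly_mixing_distr[OF assms(1) cont comm])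
  moreover have "na_weakly_mixing weak_star_topology (induced_comp f) \<Longrightarrow>
      na_transitive weak_star_topology (induced_comp f)"
    by (rule na_weakly_mixing_imp_na_transitive)
  moreover have "na_transitive weak_star_topology (induced_comp f) \<Longrightarrow>
      na_weakly_mixing euclidean (comp_seq f)"
    unfolding induced
    by (rule two_targets_imp_na_weakly_mixing[OF cont comm na_transitive_distr_imp_two_targets[OF cont]])
  ultimately show ?thesis
    by blast
qed

end
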